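(* Let $\mathbb{T}$ be a time scale, let $a<b$ be points of $\mathbb{T}$, and let $\alpha,\beta$ be real constants. Suppose the characteristic equation $\lambda^2+\alpha\lambda+\beta=0$ has two distinct positive roots. Then the equation $$x^{\Delta\Delta}(t)+\alpha x^{\Delta}(t)+\beta x(t)=0,\quad t\in[a,b]_{\mathbb{T}},$$ has Hyers–Ulam stability on $[a,b]_{\mathbb{T}}$; that is, for every $\varepsilon>0$, whenever $y\in C^2_{rd}([a,b]_{\mathbb{T}})$ satisfies $|y^{\Delta\Delta}(t)+\alpha y^{\Delta}(t)+\beta y(t)|\le\varepsilon$ for all $t\in[a,b]_{\mathbb{T}}$, there exists a solution $u\in C^2_{rd}([a,b]_{\mathbb{T}})$ of $u^{\Delta\Delta}+\alpha u^{\Delta}+\beta u=0$ on $[a,b]_{\mathbb{T}}$ such that $|y(t)-u(t)|\le K\varepsilon$ for all $t\in[a,b]_{\mathbb{T}}$, for some constant $K>0$.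
   Context: A time scale $\mathbb{T}$ is a nonempty closed subset of $\mathbb{R}$; $[a,b]_{\mathbb{T}}:=[a,b]\cap\mathbb{T}$. $\sigma(t)=\inf\{s\in\mathbb{T}:s>t\}$ is the forward jump operator, $\mu(t)=\sigma(t)-t$ the graininess, and $f^{\Delta}$ denotes the delta (Hilger) derivative; $f^{\Delta\Delta}=(f^\Delta)^\Delta$. $C^2_{rd}([a,b]_{\mathbb{T}})$ denotes the functions that are twice delta differentiable on $[a,b]_{\mathbb{T}}$ with rd-continuous second delta derivative. *)

theory Defs
  imports "HOL-Analysis.Analysis"
begin

text \<open>Time scales are modelled as nonempty closed subsets of the reals.
Functions are real-valued functions on the reals; only their values on the
time scale matter.\<close>

definition time_scale :: "real set \<Rightarrow> bool" where
  "time_scale T \<longleftrightarrow> T \<noteq> {} \<and> closed T"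

text \<open>Forward/backward jump operators (inf of empty set = sup T, sup of empty set = inf T).\<close>
definition sigma :: "real set \<Rightarrow> real \<Rightarrow> real" where
  "sigma T t = (if \<exists>s\<in>T. s > t then Inf {s\<in>T. s > t} else t)"

definition rho :: "real set \<Rightarrow> real \<Rightarrow> real" where
  "rho T t = (if \<exists>s\<in>T. s < t then Sup {s\<in>T. s < t} else t)"

definition mu :: "real set \<Rightarrow> real \<Rightarrow> real" where
  "mu T t = sigma T t - t"

definition kappa :: "real set \<Rightarrow> real set" where
  "kappa T = T - {m. m \<in> T \<and> (\<forall>s\<in>T. s \<le> m) \<and> rho T m < m}"

definition has_delta_derivative :: "(real \<Rightarrow> real) \<Rightarrow> real \<Rightarrow> real set \<Rightarrow> real \<Rightarrow> bool" where
  "has_delta_derivative f D T t \<longleftrightarrow> t \<in> kappa T \<and>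
     (\<forall>e>0. \<exists>d>0. \<forall>s\<in>T. \<bar>s - t\<bar> < d \<longrightarrow>
        \<bar>f (sigma T t) - f s - D * (sigma T t - s)\<bar> \<le> e * \<bar>sigma T t - s\<bar>)"

definition delta_deriv :: "(real \<Rightarrow> real) \<Rightarrow> real set \<Rightarrow> real \<Rightarrow> real" where
  "delta_deriv f T t = (THE D. has_delta_derivative f D T t)"

definition delta_differentiable_on :: "(real \<Rightarrow> real) \<Rightarrow> real set \<Rightarrow> bool" where
  "delta_differentiable_on f T \<longleftrightarrow> (\<forall>t\<in>kappa T. \<exists>D. has_delta_derivative f D T t)"

definition rd_continuous_on :: "real set \<Rightarrow> (real \<Rightarrow> real) \<Rightarrow> bool" where
  "rd_continuous_on T g \<longleftrightarrow>
     (\<forall>t\<in>T. sigma T t = t \<longrightarrow> continuous (at t within T) g) \<and>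
     (\<forall>t\<in>T. rho T t = t \<longrightarrow> (\<exists>L. (g \<longlongrightarrow> L) (at t within (T \<inter> {..<t}))))"

definition C2rd :: "real set \<Rightarrow> (real \<Rightarrow> real) \<Rightarrow> bool" where
  "C2rd T f \<longleftrightarrow> delta_differentiable_on f T \<and>
     delta_differentiable_on (delta_deriv f T) (kappa T) \<and>
     rd_continuous_on (kappa (kappa T)) (delta_deriv (delta_deriv f T) (kappa T))"

definition delta_deriv2 :: "(real \<Rightarrow> real) \<Rightarrow> real set \<Rightarrow> real \<Rightarrow> real" where
  "delta_deriv2 f T = delta_deriv (delta_deriv f T) (kappa T)"

end

theory Submission
  imports Defs
begin

text \<open>With \<open>l\<^sub>1, l\<^sub>2\<close> the roots, the operator factors exactly on any time scale:
  \<open>y\<^sup>\<Delta>\<^sup>\<Delta> - (l\<^sub>1 + l\<^sub>2) y\<^sup>\<Delta> + l\<^sub>1 l\<^sub>2 y = w\<^sup>\<Delta> - l\<^sub>1 w\<close> with \<open>w = y\<^sup>\<Delta> - l\<^sub>2 y\<close>.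
  For \<open>l > 0\<close> the exponential \<open>e\<^sub>l(\<cdot>, a)\<close> lies between \<open>1\<close> and \<open>exp (l (b - a))\<close> on
  \<open>[a, b]\<close>, and a first order defect \<open>|w\<^sup>\<Delta> - l w| \<le> B\<close> is controlled by variation of
  constants: \<open>(w / e\<^sub>l)\<^sup>\<Delta> = (w\<^sup>\<Delta> - l w) / e\<^sub>l\<^sup>\<sigma>\<close>, so by the mean value inequality \<open>w\<close>
  stays within \<open>exp (l (b - a)) B (t - a)\<close> of \<open>w(a) e\<^sub>l\<close>.  Applying this first to \<open>w\<close> and
  then to \<open>y - k e\<^sub>l\<^sub>1\<close> produces a solution \<open>k e\<^sub>l\<^sub>1 + d e\<^sub>l\<^sub>2\<close> within \<open>K \<epsilon>\<close> of \<open>y\<close>.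
  If \<open>[a, b]\<^sub>\<T> = {a, b}\<close> the equation is a single condition at \<open>a\<close>, met by moving \<open>y(b)\<close>.\<close>

section \<open>Jump operators\<close>

lemma sigma_ge: "t \<le> sigma S t"
  unfolding sigma_def by (auto intro!: cInf_greatest)

lemma sigma_le: "s \<in> S \<Longrightarrow> t < s \<Longrightarrow> sigma S t \<le> s"
  unfolding sigma_def by (auto intro!: cInf_lower bdd_belowI[of _ t])

lemma sigma_mem:
  assumes "closed S" "t \<in> S"
  shows "sigma S t \<in> S"
proof (cases "\<exists>s\<in>S. s > t")
  case True
  then have "Inf {s\<in>S. s > t} \<in> S"
    using assms(1) by (intro closed_subset_contains_Inf bdd_belowI[of _ t]) auto
  then show ?thesis using True unfolding sigma_def by simp
qed (simp add: sigma_def assms)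

lemma sigma_eqI:
  assumes "t \<in> S" "s < t" "\<forall>x\<in>S. \<not> (s < x \<and> x < t)"
  shows "sigma S s = t"
proof -
  have "{x\<in>S. x > s} \<noteq> {}" using assms by auto
  moreover have "\<forall>x\<in>{x\<in>S. x > s}. t \<le> x" using assms by force
  ultimately have "Inf {x\<in>S. x > s} = t" using assms by (intro cInf_eq_minimum) auto
  then show ?thesis using assms unfolding sigma_def by auto
qed

lemma sigma_right_dense:
  assumes "sigma S t = t" "s \<in> S" "t < s" "e > 0"
  obtains x where "x \<in> S" "t < x" "x < t + e"
proof -
  have ne: "{x\<in>S. x > t} \<noteq> {}" using assms by auto
  have "Inf {x\<in>S. x > t} < t + e" using assms unfolding sigma_def by (auto split: if_splits)
  then show ?thesis using that cInf_less_iff[OF ne bdd_belowI[of _ t]] by auto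
qed

lemma rho_le: "rho S t \<le> t"
  unfolding rho_def by (auto intro!: cSup_least)

lemma rho_ge: "s \<in> S \<Longrightarrow> s < t \<Longrightarrow> s \<le> rho S t"
  unfolding rho_def by (auto intro!: cSup_upper bdd_aboveI[of _ t])

lemma rho_left_dense:
  assumes "rho S t = t" "s \<in> S" "s < t" "e > 0"
  obtains x where "x \<in> S" "t - e < x" "x < t"
proof -
  have ne: "{x\<in>S. x < t} \<noteq> {}" using assms by auto
  have "t - e < Sup {x\<in>S. x < t}" using assms unfolding rho_def by (auto split: if_splits)
  then show ?thesis using that less_cSup_iff[OF ne bdd_aboveI[of _ t]] by auto
qed

lemma kappa_subset: "kappa S \<subseteq> S"
  unfolding kappa_def by auto

lemma kappa_memI: "t \<in> S \<Longrightarrow> s \<in> S \<Longrightarrow> t < s \<Longrightarrow> t \<in> kappa S"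
  unfolding kappa_def by force

lemma not_in_kappa: "t \<in> S \<Longrightarrow> t \<notin> kappa S \<Longrightarrow> (\<forall>s\<in>S. s \<le> t) \<and> rho S t < t"
  unfolding kappa_def by auto

lemma compact_kappa:
  assumes "compact S"
  shows "compact (kappa S)"
proof (cases "S \<subseteq> kappa S")
  case True
  then show ?thesis using assms kappa_subset by (metis subset_antisym)
next
  case False
  then obtain m where m: "m \<in> S" "m \<notin> kappa S" by auto
  note max = not_in_kappa[OF m]
  have "kappa S = S \<inter> {..rho S m}"
  proof (intro subset_antisym subsetI)
    fix x assume x: "x \<in> kappa S"
    then have "x \<in> S" "x \<noteq> m" using m kappa_subset by auto
    then have "x < m" using max by force
    then show "x \<in> S \<inter> {..rho S m}" using rho_ge \<open>x \<in> S\<close> by auto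
  next
    fix x assume "x \<in> S \<inter> {..rho S m}"
    then show "x \<in> kappa S" using kappa_memI m max by force
  qed
  then show ?thesis using assms by (simp add: compact_Int_closed)
qed

lemma sigma_kappa:
  assumes "s \<in> kappa S" "t < s"
  shows "sigma (kappa S) t = sigma S t"
proof -
  let ?A = "{x\<in>S. x > t}" and ?B = "{x\<in>kappa S. x > t}"
  have sub: "?B \<subseteq> ?A" using kappa_subset by blast
  have neB: "?B \<noteq> {}" using assms by blast
  have "Inf ?A = Inf ?B"
  proof (rule antisym)
    show "Inf ?A \<le> Inf ?B" by (rule cInf_superset_mono[OF neB bdd_belowI[of _ t] sub]) auto
    show "Inf ?B \<le> Inf ?A"
    proof (rule cInf_greatest)
      show "?A \<noteq> {}" using sub neB by blast
      fix x assume x: "x \<in> ?A"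
      show "Inf ?B \<le> x"
      proof (cases "x \<in> kappa S")
        case True
        then show ?thesis using x by (intro cInf_lower bdd_belowI[of _ t]) auto
      next
        case False
        then have "s \<le> x" using not_in_kappa x assms kappa_subset by blast
        moreover have "Inf ?B \<le> s" using assms by (intro cInf_lower bdd_belowI[of _ t]) auto
        ultimately show ?thesis by simp
      qed
    qed
  qed
  moreover have "\<exists>x\<in>S. x > t" "\<exists>x\<in>kappa S. x > t" using assms kappa_subset by blast+
  ultimately show ?thesis unfolding sigma_def by simp
qed

section \<open>Delta derivatives\<close>

lemma eq_zero_if_abs_le_mult_all_pos:
  fixes x c :: real
  assumes "\<And>e. e > 0 \<Longrightarrow> \<bar>x\<bar> \<le> e * c"
  shows "x = 0"
proof (rule ccontr)
  assume "x \<noteq> 0"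
  define e where "e = \<bar>x\<bar> / (2 * (\<bar>c\<bar> + 1))"
  have e: "e > 0" using \<open>x \<noteq> 0\<close> unfolding e_def by (intro divide_pos_pos) auto
  have "\<bar>x\<bar> \<le> e * \<bar>c\<bar>" using assms[OF e] e by (meson abs_ge_self mult_left_mono order_trans less_imp_le)
  also have "\<dots> < \<bar>x\<bar>" using \<open>x \<noteq> 0\<close> unfolding e_def by (simp add: field_simps add_nonneg_pos)
  finally show False by simp
qed

lemma has_delta_derivative_kappaD: "has_delta_derivative f D S t \<Longrightarrow> t \<in> kappa S"
  unfolding has_delta_derivative_def by blast

lemma has_delta_derivative_memD: "has_delta_derivative f D S t \<Longrightarrow> t \<in> S"
  using has_delta_derivative_kappaD kappa_subset by blast

lemma has_delta_derivative_sigma: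
  assumes "has_delta_derivative f D S t"
  shows "f (sigma S t) = f t + D * (sigma S t - t)"
proof -
  have "\<bar>f (sigma S t) - f t - D * (sigma S t - t)\<bar> \<le> e * \<bar>sigma S t - t\<bar>" if "e > 0" for e
    using assms that has_delta_derivative_memD[OF assms] unfolding has_delta_derivative_def by force
  then have "f (sigma S t) - f t - D * (sigma S t - t) = 0" by (rule eq_zero_if_abs_le_mult_all_pos)
  then show ?thesis by simp
qed

lemma islimpt_if_sigma_eq:
  assumes t: "t \<in> kappa S" "sigma S t = t" and x: "x \<in> S" "x \<noteq> t"
  shows "t islimpt S"
  unfolding islimpt_approachable
proof (intro allI impI)
  fix e :: real assume e: "e > 0"
  have tS: "t \<in> S" using t kappa_subset by blast
  show "\<exists>s\<in>S. s \<noteq> t \<and> dist s t < e"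
  proof (cases "\<exists>s\<in>S. s > t")
    case True
    then obtain s0 where "s0 \<in> S" "t < s0" by blast
    then obtain s where "s \<in> S" "t < s" "s < t + e" using sigma_right_dense t(2) e by metis
    then show ?thesis by (intro bexI[of _ s]) (auto simp: dist_real_def)
  next
    case False
    then have "\<not> rho S t < t" using t tS unfolding kappa_def by force
    then have "rho S t = t" using rho_le[of S t] by simp
    moreover have "x < t" using False x by force
    ultimately obtain s where "s \<in> S" "t - e < s" "s < t" using rho_left_dense x(1) e by metis
    then show ?thesis by (intro bexI[of _ s]) (auto simp: dist_real_def)
  qed
qed

lemma difference_quotient_error:
  fixes a b s t D :: real
  assumes "s \<noteq> t"
  shows "\<bar>(a - b) / (s - t) - D\<bar> * \<bar>t - s\<bar> = \<bar>b - a - D * (t - s)\<bar>"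
proof -
  have "(a - b) / (s - t) - D = (a - b - D * (s - t)) / (s - t)" using assms by (simp add: field_simps)
  then show ?thesis using assms by (simp add: abs_divide abs_minus_commute algebra_simps)
qed

lemma has_delta_derivative_iff_field_derivative:
  assumes "t \<in> kappa S" "sigma S t = t"
  shows "has_delta_derivative f D S t \<longleftrightarrow> (f has_field_derivative D) (at t within S)"
proof
  assume h: "has_delta_derivative f D S t"
  show "(f has_field_derivative D) (at t within S)"
    unfolding has_field_derivative_iff tendsto_iff eventually_at
  proof (intro allI impI)
    fix e :: real assume e: "e > 0"
    then obtain d where d: "d > 0" "\<forall>s\<in>S. \<bar>s - t\<bar> < d \<longrightarrow> \<bar>f t - f s - D * (t - s)\<bar> \<le> e / 2 * \<bar>t - s\<bar>"
      using h assms(2) unfolding has_delta_derivative_def by (metis half_gt_zero)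
    show "\<exists>d>0. \<forall>x\<in>S. x \<noteq> t \<and> dist x t < d \<longrightarrow> dist ((f x - f t) / (x - t)) D < e"
    proof (intro exI[of _ d] conjI ballI impI)
      fix s assume s: "s \<in> S" "s \<noteq> t \<and> dist s t < d"
      have "\<bar>(f s - f t) / (s - t) - D\<bar> * \<bar>t - s\<bar> \<le> e / 2 * \<bar>t - s\<bar>"
        using difference_quotient_error[of s t "f s" "f t" D] d s by (simp add: dist_real_def)
      then have "\<bar>(f s - f t) / (s - t) - D\<bar> \<le> e / 2" using s by simp
      then show "dist ((f s - f t) / (s - t)) D < e" using e by (simp add: dist_real_def)
    qed (use d in simp)
  qed
next
  assume h: "(f has_field_derivative D) (at t within S)"
  show "has_delta_derivative f D S t"
    unfolding has_delta_derivative_def assms(2)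
  proof (intro conjI allI impI)
    fix e :: real assume e: "e > 0"
    then obtain d where d: "d > 0" "\<forall>x\<in>S. x \<noteq> t \<and> dist x t < d \<longrightarrow> dist ((f x - f t) / (x - t)) D < e"
      using h unfolding has_field_derivative_iff tendsto_iff eventually_at by blast
    show "\<exists>d>0. \<forall>s\<in>S. \<bar>s - t\<bar> < d \<longrightarrow> \<bar>f t - f s - D * (t - s)\<bar> \<le> e * \<bar>t - s\<bar>"
    proof (intro exI[of _ d] conjI ballI impI)
      fix s assume s: "s \<in> S" "\<bar>s - t\<bar> < d"
      show "\<bar>f t - f s - D * (t - s)\<bar> \<le> e * \<bar>t - s\<bar>"
      proof (cases "s = t")
        case False
        then have "\<bar>(f s - f t) / (s - t) - D\<bar> * \<bar>t - s\<bar> \<le> e * \<bar>t - s\<bar>"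
          using d s by (intro mult_right_mono) (auto simp: dist_real_def)
        then show ?thesis using difference_quotient_error[OF False, of "f s" "f t" D] by simp
      qed simp
    qed (use d in simp)
  qed (use assms in simp)
qed

text \<open>The second point \<open>x\<close> is needed: on a one-point time scale every number is a delta
  derivative.\<close>
lemma has_delta_derivative_unique:
  assumes d1: "has_delta_derivative f D1 S t" and d2: "has_delta_derivative f D2 S t"
    and x: "x \<in> S" "x \<noteq> t"
  shows "D1 = D2"
proof (cases "t < sigma S t")
  case True
  then show ?thesis using has_delta_derivative_sigma[OF d1] has_delta_derivative_sigma[OF d2] by simp
next
  case False
  then have st: "sigma S t = t" using sigma_ge[of t S] by simp
  have tk: "t \<in> kappa S" using has_delta_derivative_kappaD[OF d1] .
  have "at t within S \<noteq> bot"
    using islimpt_if_sigma_eq[OF tk st x] by (simp add: trivial_limit_within)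
  then show ?thesis using has_field_derivative_unique d1 d2
    unfolding has_delta_derivative_iff_field_derivative[OF tk st] by blast
qed

lemma delta_deriv_eqI:
  assumes "has_delta_derivative f D S t" "x \<in> S" "x \<noteq> t"
  shows "delta_deriv f S t = D"
  unfolding delta_deriv_def using assms has_delta_derivative_unique by blast

lemma has_delta_derivative_delta_deriv:
  assumes "delta_differentiable_on f S" "t \<in> kappa S" "x \<in> S" "x \<noteq> t"
  shows "has_delta_derivative f (delta_deriv f S t) S t"
  using assms delta_deriv_eqI unfolding delta_differentiable_on_def by metis

lemma has_delta_derivative_imp_continuous:
  assumes "has_delta_derivative f D S t"
  shows "continuous (at t within S) f"
  unfolding continuous_within_eps_delta
proof (intro allI impI)
  fix \<epsilon> :: real assume ep: "\<epsilon> > 0"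
  define m where "m = sigma S t - t"
  have m0: "m \<ge> 0" using sigma_ge[of t S] by (simp add: m_def)
  define e where "e = \<epsilon> / (2 * (m + 1))"
  have e0: "e > 0" using ep m0 by (simp add: e_def)
  obtain d where d: "d > 0" "\<forall>s\<in>S. \<bar>s - t\<bar> < d \<longrightarrow> \<bar>f (sigma S t) - f s - D * (sigma S t - s)\<bar> \<le> e * \<bar>sigma S t - s\<bar>"
    using assms e0 unfolding has_delta_derivative_def by blast
  define d' where "d' = min d (min 1 (\<epsilon> / (2 * (\<bar>D\<bar> + 1))))"
  show "\<exists>\<delta>>0. \<forall>x'\<in>S. dist x' t < \<delta> \<longrightarrow> dist (f x') (f t) < \<epsilon>"
  proof (intro exI[of _ d'] conjI ballI impI)
    show "d' > 0" using d ep by (simp add: d'_def)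
    fix s assume sS: "s \<in> S" and "dist s t < d'"
    then have st: "\<bar>s - t\<bar> < d'" by (simp add: dist_real_def)
    have "\<bar>sigma S t - s\<bar> \<le> m + 1" using st m0 unfolding m_def d'_def by auto
    moreover have "\<bar>f (sigma S t) - f s - D * (sigma S t - s)\<bar> \<le> e * \<bar>sigma S t - s\<bar>"
      using d(2) sS st unfolding d'_def by simp
    ultimately have Y: "\<bar>f (sigma S t) - f s - D * (sigma S t - s)\<bar> \<le> e * (m + 1)"
      using e0 by (smt (verit) mult_left_mono)
    have "\<bar>D * (s - t)\<bar> \<le> \<bar>D\<bar> * (\<epsilon> / (2 * (\<bar>D\<bar> + 1)))"
      using st unfolding d'_def abs_mult by (intro mult_left_mono) auto
    also have "\<dots> < \<epsilon> / 2" using ep by (simp add: field_simps)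
    finally have Z: "\<bar>D * (s - t)\<bar> < \<epsilon> / 2" .
    have "e * (m + 1) \<le> \<epsilon> / 2" unfolding e_def using ep m0 by (simp add: field_simps)
    moreover have "f s - f t = - (f (sigma S t) - f s - D * (sigma S t - s)) + D * (s - t)"
      using has_delta_derivative_sigma[OF assms] by (simp add: algebra_simps)
    ultimately have "\<bar>f s - f t\<bar> < \<epsilon>" using Y Z by linarith
    then show "dist (f s) (f t) < \<epsilon>" by (simp add: dist_real_def)
  qed
qed

lemma continuous_within_if_not_kappa:
  assumes "t \<in> S" "t \<notin> kappa S"
  shows "continuous (at t within S) f"
proof -
  note max = not_in_kappa[OF assms]
  have "\<not> t islimpt S"
  proof
    assume "t islimpt S"
    moreover have "t - rho S t > 0" using max by simp
    ultimately obtain x where x: "x \<in> S" "x \<noteq> t" "dist x t < t - rho S t"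
      unfolding islimpt_approachable by blast
    then have "x < t" using max by (metis order.not_eq_order_implies_strict)
    then show False using rho_ge[OF x(1) \<open>x < t\<close>] x(3) by (auto simp: dist_real_def)
  qed
  then have "at t within S = bot" by (simp add: trivial_limit_within)
  then show ?thesis by (simp add: continuous_within)
qed

lemma delta_differentiable_on_imp_continuous_on:
  assumes "delta_differentiable_on f S"
  shows "continuous_on S f"
  unfolding continuous_on_eq_continuous_within
proof
  fix t assume t: "t \<in> S"
  show "continuous (at t within S) f"
  proof (cases "t \<in> kappa S")
    case True
    then obtain D where "has_delta_derivative f D S t"
      using assms unfolding delta_differentiable_on_def by blast
    then show ?thesis by (rule has_delta_derivative_imp_continuous)
  qed (rule continuous_within_if_not_kappa[OF t])
qed

lemma rd_continuous_on_if_continuous_on: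
  assumes "continuous_on S g"
  shows "rd_continuous_on S g"
  unfolding rd_continuous_on_def
proof (intro conjI ballI impI)
  fix t assume "t \<in> S"
  then show "continuous (at t within S) g" using assms continuous_on_eq_continuous_within by blast
  then have "(g \<longlongrightarrow> g t) (at t within S \<inter> {..<t})"
    unfolding continuous_within by (rule tendsto_within_subset) auto
  then show "\<exists>L. (g \<longlongrightarrow> L) (at t within S \<inter> {..<t})" by blast
qed

lemma has_delta_derivative_lincomb:
  assumes d1: "has_delta_derivative f D1 S t" and d2: "has_delta_derivative g D2 S t"
  shows "has_delta_derivative (\<lambda>x. c1 * f x + c2 * g x) (c1 * D1 + c2 * D2) S t"
  unfolding has_delta_derivative_def
proof (intro conjI allI impI)
  show "t \<in> kappa S" using has_delta_derivative_kappaD[OF d1] .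
  fix e :: real assume e: "e > 0"
  define e' where "e' = e / (\<bar>c1\<bar> + \<bar>c2\<bar> + 1)"
  have e': "e' > 0" using e by (simp add: e'_def)
  let ?\<sigma> = "sigma S t"
  obtain da where da: "da > 0" "\<forall>s\<in>S. \<bar>s - t\<bar> < da \<longrightarrow> \<bar>f ?\<sigma> - f s - D1 * (?\<sigma> - s)\<bar> \<le> e' * \<bar>?\<sigma> - s\<bar>"
    using d1 e' unfolding has_delta_derivative_def by blast
  obtain db where db: "db > 0" "\<forall>s\<in>S. \<bar>s - t\<bar> < db \<longrightarrow> \<bar>g ?\<sigma> - g s - D2 * (?\<sigma> - s)\<bar> \<le> e' * \<bar>?\<sigma> - s\<bar>"
    using d2 e' unfolding has_delta_derivative_def by blast
  show "\<exists>d>0. \<forall>s\<in>S. \<bar>s - t\<bar> < d \<longrightarrow>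
      \<bar>c1 * f ?\<sigma> + c2 * g ?\<sigma> - (c1 * f s + c2 * g s) - (c1 * D1 + c2 * D2) * (?\<sigma> - s)\<bar> \<le> e * \<bar>?\<sigma> - s\<bar>"
  proof (intro exI[of _ "min da db"] conjI ballI impI)
    show "min da db > 0" using da db by simp
    fix s assume s: "s \<in> S" "\<bar>s - t\<bar> < min da db"
    define X1 where "X1 = f ?\<sigma> - f s - D1 * (?\<sigma> - s)"
    define X2 where "X2 = g ?\<sigma> - g s - D2 * (?\<sigma> - s)"
    have X: "\<bar>X1\<bar> \<le> e' * \<bar>?\<sigma> - s\<bar>" "\<bar>X2\<bar> \<le> e' * \<bar>?\<sigma> - s\<bar>"
      using da db s unfolding X1_def X2_def by auto
    have "\<bar>c1 * X1 + c2 * X2\<bar> \<le> \<bar>c1\<bar> * \<bar>X1\<bar> + \<bar>c2\<bar> * \<bar>X2\<bar>"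
      by (simp add: abs_mult[symmetric] abs_triangle_ineq)
    also have "\<dots> \<le> \<bar>c1\<bar> * (e' * \<bar>?\<sigma> - s\<bar>) + \<bar>c2\<bar> * (e' * \<bar>?\<sigma> - s\<bar>)"
      using X by (intro add_mono mult_left_mono) auto
    also have "\<dots> = (\<bar>c1\<bar> + \<bar>c2\<bar>) * e' * \<bar>?\<sigma> - s\<bar>" by (simp add: algebra_simps)
    also have "\<dots> \<le> e * \<bar>?\<sigma> - s\<bar>"
      by (rule mult_right_mono) (use e in \<open>auto simp: e'_def field_simps\<close>)
    finally show "\<bar>c1 * f ?\<sigma> + c2 * g ?\<sigma> - (c1 * f s + c2 * g s) - (c1 * D1 + c2 * D2) * (?\<sigma> - s)\<bar>
        \<le> e * \<bar>?\<sigma> - s\<bar>"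
      unfolding X1_def X2_def by (simp add: algebra_simps)
  qed
qed

lemma has_delta_derivative_subset:
  assumes "has_delta_derivative f D S t" "S' \<subseteq> S" "t \<in> kappa S'" "sigma S' t = sigma S t"
  shows "has_delta_derivative f D S' t"
  unfolding has_delta_derivative_def
proof (intro conjI allI impI)
  fix e :: real assume "e > 0"
  then obtain d where "d > 0" "\<forall>s\<in>S. \<bar>s - t\<bar> < d \<longrightarrow>
      \<bar>f (sigma S t) - f s - D * (sigma S t - s)\<bar> \<le> e * \<bar>sigma S t - s\<bar>"
    using assms(1) unfolding has_delta_derivative_def by blast
  then show "\<exists>d>0. \<forall>s\<in>S'. \<bar>s - t\<bar> < d \<longrightarrow>
      \<bar>f (sigma S' t) - f s - D * (sigma S' t - s)\<bar> \<le> e * \<bar>sigma S' t - s\<bar>"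
    using assms(2,4) by auto
qed (fact assms)

lemma has_delta_derivative_kappa:
  assumes "has_delta_derivative f D S t" "s \<in> kappa S" "t < s"
  shows "has_delta_derivative f D (kappa S) t"
proof (rule has_delta_derivative_subset[OF assms(1) kappa_subset])
  show "t \<in> kappa (kappa S)" using kappa_memI has_delta_derivative_kappaD[OF assms(1)] assms(2,3) .
  show "sigma (kappa S) t = sigma S t" using sigma_kappa[OF assms(2,3)] .
qed

lemma has_delta_derivative_cong:
  assumes "closed S" "t \<in> S" "\<forall>x\<in>S. f x = g x"
  shows "has_delta_derivative f D S t \<longleftrightarrow> has_delta_derivative g D S t"
  using assms sigma_mem[OF assms(1,2)] unfolding has_delta_derivative_def by auto

lemma has_delta_derivative_right_scatteredI:
  assumes "t \<in> kappa S" "t < sigma S t"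
    and jump: "f (sigma S t) = f t + D * (sigma S t - t)" and cont: "continuous (at t within S) f"
  shows "has_delta_derivative f D S t"
  unfolding has_delta_derivative_def
proof (intro conjI allI impI)
  fix e :: real assume e: "e > 0"
  define m where "m = sigma S t - t"
  have m: "m > 0" using assms by (simp add: m_def)
  have "e * m / 2 > 0" using e m by simp
  then obtain d1 where d1: "d1 > 0" "\<forall>s\<in>S. dist s t < d1 \<longrightarrow> dist (f s) (f t) < e * m / 2"
    using cont unfolding continuous_within_eps_delta by blast
  define d2 where "d2 = e * m / (2 * (\<bar>D\<bar> + 1))"
  have d2: "d2 > 0" using e m unfolding d2_def by (intro divide_pos_pos) auto
  show "\<exists>d>0. \<forall>s\<in>S. \<bar>s - t\<bar> < d \<longrightarrow> \<bar>f (sigma S t) - f s - D * (sigma S t - s)\<bar> \<le> e * \<bar>sigma S t - s\<bar>"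
  proof (intro exI[of _ "min m (min d1 d2)"] conjI ballI impI)
    show "min m (min d1 d2) > 0" using m d1 d2 by simp
    fix s assume s: "s \<in> S" "\<bar>s - t\<bar> < min m (min d1 d2)"
    have "s \<le> t"
    proof (rule ccontr)
      assume "\<not> s \<le> t"
      then have "sigma S t \<le> s" using sigma_le[OF s(1)] by simp
      then show False using s(2) \<open>\<not> s \<le> t\<close> by (simp add: m_def)
    qed
    have h1: "\<bar>f s - f t\<bar> < e * m / 2" using d1 s by (simp add: dist_real_def)
    have "\<bar>D * (t - s)\<bar> \<le> \<bar>D\<bar> * d2" unfolding abs_mult using s by (intro mult_left_mono) auto
    also have "\<dots> \<le> e * m / 2" unfolding d2_def using e m by (simp add: field_simps)
    finally have h2: "\<bar>D * (t - s)\<bar> \<le> e * m / 2" .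
    have "f (sigma S t) - f s - D * (sigma S t - s) = (f t - f s) - D * (t - s)"
      using jump by (simp add: algebra_simps)
    then have "\<bar>f (sigma S t) - f s - D * (sigma S t - s)\<bar> \<le> e * m" using h1 h2 by linarith
    also have "\<dots> \<le> e * \<bar>sigma S t - s\<bar>" using \<open>s \<le> t\<close> e by (simp add: m_def)
    finally show "\<bar>f (sigma S t) - f s - D * (sigma S t - s)\<bar> \<le> e * \<bar>sigma S t - s\<bar>" .
  qed
qed (fact assms)

lemma has_delta_derivative_divide:
  assumes df: "has_delta_derivative f Df S t" and dg: "has_delta_derivative g Dg S t"
    and "g t \<noteq> 0" "g (sigma S t) \<noteq> 0"
  shows "has_delta_derivative (\<lambda>x. f x / g x) ((Df * g t - f t * Dg) / (g t * g (sigma S t))) S t"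
proof -
  have tk: "t \<in> kappa S" using has_delta_derivative_kappaD[OF df] .
  show ?thesis
  proof (cases "t < sigma S t")
    case True
    have cont: "continuous (at t within S) (\<lambda>x. f x / g x)"
      using has_delta_derivative_imp_continuous[OF df] has_delta_derivative_imp_continuous[OF dg] assms(3)
      by (rule continuous_at_within_divide)
    define h where "h = sigma S t - t"
    have fs: "f (sigma S t) = f t + Df * h" and gs: "g (sigma S t) = g t + Dg * h"
      using has_delta_derivative_sigma[OF df] has_delta_derivative_sigma[OF dg] by (simp_all add: h_def)
    have "f t / g t + (Df * g t - f t * Dg) / (g t * g (sigma S t)) * h
        = (f t * g (sigma S t) + (Df * g t - f t * Dg) * h) / (g t * g (sigma S t))"
      using assms(3,4) by (simp add: field_simps)
    also have "f t * g (sigma S t) + (Df * g t - f t * Dg) * h = f (sigma S t) * g t"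
      unfolding fs gs by (simp add: algebra_simps)
    also have "f (sigma S t) * g t / (g t * g (sigma S t)) = f (sigma S t) / g (sigma S t)"
      using assms(3) by simp
    finally have "f (sigma S t) / g (sigma S t)
        = f t / g t + (Df * g t - f t * Dg) / (g t * g (sigma S t)) * h" ..
    then show ?thesis using has_delta_derivative_right_scatteredI[OF tk True _ cont] by (simp add: h_def)
  next
    case False
    then have st: "sigma S t = t" using sigma_ge[of t S] by simp
    show ?thesis
      using df dg assms(3) unfolding st has_delta_derivative_iff_field_derivative[OF tk st]
      by (rule DERIV_divide)
  qed
qed

section \<open>Mean value inequality\<close>

lemma time_scale_induction_step:
  assumes "closed S" "c \<in> S" "\<forall>s\<in>S. s \<le> c \<longrightarrow> P s" "s0 \<in> S" "c < s0"
    and scattered: "\<And>t. t \<in> S \<Longrightarrow> t < sigma S t \<Longrightarrow> P t \<Longrightarrow> P (sigma S t)"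
    and dense: "\<And>t. t \<in> S \<Longrightarrow> sigma S t = t \<Longrightarrow> P t \<Longrightarrow> \<exists>d>0. \<forall>s\<in>S. t < s \<and> s < t + d \<longrightarrow> P s"
  obtains s1 where "s1 \<in> S" "c < s1" "\<forall>s\<in>S. s \<le> s1 \<longrightarrow> P s"
proof (cases "c < sigma S c")
  case True
  have "P s" if "s \<in> S" "s \<le> sigma S c" for s
  proof (cases "s \<le> c")
    case False
    then have "sigma S c \<le> s" using sigma_le[OF that(1)] by simp
    then have "s = sigma S c" using that(2) by simp
    then show ?thesis using scattered[OF assms(2) True] assms(2,3) by simp
  qed (use assms that in auto)
  then show ?thesis using that[of "sigma S c"] sigma_mem[OF assms(1,2)] True by blast
next
  case False
  then have st: "sigma S c = c" using sigma_ge[of c S] by simp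
  obtain d where d: "d > 0" "\<forall>s\<in>S. c < s \<and> s < c + d \<longrightarrow> P s"
    using dense[OF assms(2) st] assms(2,3) by auto
  obtain s1 where s1: "s1 \<in> S" "c < s1" "s1 < c + d" using sigma_right_dense[OF st assms(4,5) d(1)] .
  have "P s" if "s \<in> S" "s \<le> s1" for s
  proof (cases "s \<le> c")
    case False
    then show ?thesis using d(2) that s1 by auto
  qed (use assms that in auto)
  then show ?thesis using that[of s1] s1 by blast
qed

text \<open>The proof considers the supremum of the initial segments on which the property holds.\<close>
lemma time_scale_induction:
  assumes "compact S" "a \<in> S" "\<forall>s\<in>S. a \<le> s" "P a"
    and closed: "closed {t\<in>S. P t}"
    and scattered: "\<And>t. t \<in> S \<Longrightarrow> t < sigma S t \<Longrightarrow> P t \<Longrightarrow> P (sigma S t)"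
    and dense: "\<And>t. t \<in> S \<Longrightarrow> sigma S t = t \<Longrightarrow> P t \<Longrightarrow> \<exists>d>0. \<forall>s\<in>S. t < s \<and> s < t + d \<longrightarrow> P s"
  shows "\<forall>t\<in>S. P t"
proof -
  define G where "G = {t\<in>S. \<forall>s\<in>S. s \<le> t \<longrightarrow> P s}"
  have aG: "a \<in> G" unfolding G_def using assms(2-4) by (auto dest: order_antisym)
  have "bdd_above S" using assms(1) by (intro bounded_imp_bdd_above compact_imp_bounded)
  then have bdd: "bdd_above G" by (rule bdd_above_mono) (auto simp: G_def)
  define c where "c = Sup G"
  have upper: "g \<le> c" if "g \<in> G" for g unfolding c_def using that bdd by (rule cSup_upper)
  have below: "P s" if "s \<in> S" "s < c" for s
  proof -
    have "s < Sup G" using that(2) by (simp add: c_def)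
    then obtain g where "g \<in> G" "s < g" using less_cSup_iff[of G s] aG bdd by auto
    then show ?thesis using that unfolding G_def by auto
  qed
  have "G \<subseteq> {t\<in>S. P t}" unfolding G_def by auto
  then have "c \<in> {t\<in>S. P t}" unfolding c_def using closed aG bdd by (intro closed_subset_contains_Sup) auto
  then have cG: "c \<in> S" "\<forall>s\<in>S. s \<le> c \<longrightarrow> P s" using below by (auto simp: order_le_less)
  have "\<not> (\<exists>s\<in>S. c < s)"
  proof
    assume "\<exists>s\<in>S. c < s"
    then obtain s0 where "s0 \<in> S" "c < s0" by blast
    then obtain s1 where "s1 \<in> S" "c < s1" "\<forall>s\<in>S. s \<le> s1 \<longrightarrow> P s"
      using time_scale_induction_step[OF compact_imp_closed[OF assms(1)] cG] scattered dense by blast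
    then show False using upper[of s1] unfolding G_def by auto
  qed
  then show ?thesis using cG by (auto simp: not_less)
qed

lemma delta_mean_value_inequality_slack:
  assumes "compact S" "a \<in> S" "\<forall>s\<in>S. a \<le> s" and cont: "continuous_on S f"
    and der: "\<And>t s. t \<in> S \<Longrightarrow> s \<in> S \<Longrightarrow> t < s \<Longrightarrow> \<exists>D. has_delta_derivative f D S t \<and> \<bar>D\<bar> \<le> M"
    and e: "e > 0" and t: "t \<in> S"
  shows "\<bar>f t - f a\<bar> \<le> (M + e) * (t - a)"
proof -
  let ?P = "\<lambda>s. \<bar>f s - f a\<bar> \<le> (M + e) * (s - a)"
  have "\<forall>s\<in>S. ?P s"
  proof (rule time_scale_induction[OF assms(1-3)])
    show "?P a" by simp
    have "continuous_on S (\<lambda>s. \<bar>f s - f a\<bar> - (M + e) * (s - a))" by (intro continuous_intros cont)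
    then have "closed (S \<inter> (\<lambda>s. \<bar>f s - f a\<bar> - (M + e) * (s - a)) -` {..0})"
      using assms(1) by (intro continuous_closed_preimage) (auto intro: compact_imp_closed)
    then show "closed {s\<in>S. ?P s}" by (simp add: vimage_def Int_def)
  next
    fix s assume s: "s \<in> S" "s < sigma S s" "?P s"
    obtain D where D: "has_delta_derivative f D S s" "\<bar>D\<bar> \<le> M"
      using der[OF s(1) sigma_mem s(2)] assms(1) s(1) compact_imp_closed by blast
    have "\<bar>f (sigma S s) - f a\<bar> \<le> \<bar>f s - f a\<bar> + \<bar>D * (sigma S s - s)\<bar>"
      using has_delta_derivative_sigma[OF D(1)] by linarith
    also have "\<dots> \<le> (M + e) * (s - a) + M * (sigma S s - s)"
      using s(2,3) D(2) by (intro add_mono) (auto simp: abs_mult mult_right_mono)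
    also have "\<dots> \<le> (M + e) * (sigma S s - a)"
      using e s(2) by (simp add: algebra_simps)
    finally show "?P (sigma S s)" .
  next
    fix s assume s: "s \<in> S" "sigma S s = s" "?P s"
    show "\<exists>d>0. \<forall>x\<in>S. s < x \<and> x < s + d \<longrightarrow> ?P x"
    proof (cases "\<exists>x\<in>S. s < x")
      case True
      then obtain D where D: "has_delta_derivative f D S s" "\<bar>D\<bar> \<le> M" using der s(1) by blast
      then obtain d where d: "d > 0" "\<forall>x\<in>S. \<bar>x - s\<bar> < d \<longrightarrow> \<bar>f s - f x - D * (s - x)\<bar> \<le> e * \<bar>s - x\<bar>"
        using e s(2) unfolding has_delta_derivative_def by force
      have "?P x" if x: "x \<in> S" "s < x" "x < s + d" for x
      proof -
        have "\<bar>f s - f x - D * (s - x)\<bar> \<le> e * (x - s)" using d x by auto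
        moreover have "\<bar>D * (s - x)\<bar> \<le> M * (x - s)"
          using D(2) x by (simp add: abs_mult abs_minus_commute mult_right_mono)
        ultimately show ?thesis using s(3) by (simp add: algebra_simps abs_le_iff)
      qed
      then show ?thesis using d(1) by blast
    qed (auto intro: exI[of _ 1])
  qed
  then show ?thesis using t by blast
qed

lemma delta_mean_value_inequality:
  assumes "compact S" "a \<in> S" "\<forall>s\<in>S. a \<le> s" and cont: "continuous_on S f"
    and der: "\<And>t s. t \<in> S \<Longrightarrow> s \<in> S \<Longrightarrow> t < s \<Longrightarrow> \<exists>D. has_delta_derivative f D S t \<and> \<bar>D\<bar> \<le> M"
    and t: "t \<in> S"
  shows "\<bar>f t - f a\<bar> \<le> M * (t - a)"
proof (rule field_le_epsilon)
  fix \<epsilon> :: real assume "\<epsilon> > 0"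
  define e where "e = \<epsilon> / (t - a + 1)"
  have e: "e > 0" "e * (t - a) \<le> \<epsilon>"
    using \<open>\<epsilon> > 0\<close> t assms(3) unfolding e_def by (auto simp: field_simps)
  have "\<bar>f t - f a\<bar> \<le> (M + e) * (t - a)"
    using delta_mean_value_inequality_slack[OF assms(1-4) der e(1) t] .
  then show "\<bar>f t - f a\<bar> \<le> M * (t - a) + \<epsilon>" using e by (simp add: algebra_simps)
qed

section \<open>The exponential function\<close>

lemma exp_minus_one_le: "exp x - 1 \<le> x * exp (x::real)"
proof -
  have "(1 - x) * exp x \<le> exp (- x) * exp x" using exp_ge_add_one_self[of "- x"] by (intro mult_right_mono) auto
  then show ?thesis by (simp add: exp_minus algebra_simps)
qed

lemma exp_minus_one_minus_le:
  fixes x :: real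
  assumes "x \<ge> 0"
  shows "exp x - 1 - x \<le> x\<^sup>2 * exp x"
proof -
  have "exp x - 1 - x \<le> x * (exp x - 1)" using exp_minus_one_le[of x] by (simp add: algebra_simps)
  also have "\<dots> \<le> x * (x * exp x)" using exp_minus_one_le[of x] assms by (intro mult_left_mono)
  finally show ?thesis by (simp add: power2_eq_square)
qed

lemma exp_sandwich_remainder:
  fixes l h Es Et M :: real
  assumes "0 \<le> l" "0 \<le> h" "1 \<le> Es" "Es \<le> M" "exp (l * h) \<le> M"
    and lower: "Es * (1 + l * h) \<le> Et" and upper: "Et \<le> Es * exp (l * h)"
  shows "\<bar>Et - Es - l * Et * h\<bar> \<le> (l * M)\<^sup>2 * h\<^sup>2"
    and "\<bar>Es - Et + l * Es * h\<bar> \<le> (l * M)\<^sup>2 * h\<^sup>2"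
proof -
  have lh: "0 \<le> l * h" using assms by simp
  have M0: "0 \<le> M" using assms by simp
  have "exp (l * h) - 1 - l * h \<le> (l * h)\<^sup>2 * M"
    using exp_minus_one_minus_le[OF lh] mult_left_mono[OF assms(5) zero_le_power2[of "l * h"]] by linarith
  moreover have "0 \<le> exp (l * h) - 1 - l * h" using exp_ge_add_one_self[of "l * h"] by linarith
  ultimately have "Es * (exp (l * h) - 1 - l * h) \<le> M * ((l * h)\<^sup>2 * M)"
    by (rule mult_mono[OF assms(4) _ M0])
  then have quad: "Es * (exp (l * h) - 1 - l * h) \<le> (l * M)\<^sup>2 * h\<^sup>2"
    by (simp add: power2_eq_square algebra_simps)
  have "exp (l * h) - 1 \<le> l * h * M"
    using exp_minus_one_le[of "l * h"] mult_left_mono[OF assms(5) lh] by linarith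
  moreover have "0 \<le> exp (l * h) - 1" using exp_ge_add_one_self[of "l * h"] lh by linarith
  ultimately have "Es * (exp (l * h) - 1) \<le> M * (l * h * M)" by (rule mult_mono[OF assms(4) _ M0])
  then have "Et - Es \<le> M * (l * h * M)" using upper by (simp add: algebra_simps)
  then have "l * h * (Et - Es) \<le> l * h * (M * (l * h * M))" by (rule mult_left_mono[OF _ lh])
  then have "l * h * (Et - Es) \<le> (l * M)\<^sup>2 * h\<^sup>2" by (simp add: power2_eq_square algebra_simps)
  moreover have "- (l * h) * (Et - Es) \<le> Et - Es - l * Et * h" using lower by (simp add: algebra_simps)
  moreover have "Et - Es - l * Et * h \<le> Es * (exp (l * h) - 1 - l * h)"
  proof -
    have "0 \<le> Es * (l * h)" using assms(3) lh by simp
    then have "Es \<le> Et" using lower by (simp add: algebra_simps)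
    then have "l * h * Es \<le> l * h * Et" by (rule mult_left_mono[OF _ lh])
    then show ?thesis using upper by (simp add: algebra_simps)
  qed
  ultimately show "\<bar>Et - Es - l * Et * h\<bar> \<le> (l * M)\<^sup>2 * h\<^sup>2" using quad by (simp add: abs_le_iff)
  have "0 \<le> Et - Es - l * Es * h" "Et - Es - l * Es * h \<le> Es * (exp (l * h) - 1 - l * h)"
    using lower upper by (simp_all add: algebra_simps)
  then show "\<bar>Es - Et + l * Es * h\<bar> \<le> (l * M)\<^sup>2 * h\<^sup>2" using quad by (simp add: abs_le_iff)
qed

text \<open>Two properties of the exponential function \<open>e\<^sub>l(\<cdot>, a)\<close>: the jump law across a gap and a
  quadratic remainder estimate.  Unlike the delta derivative they pass to subsets such as
  \<open>\<T>\<^sup>\<kappa>\<close>, and they determine the delta derivative \<open>l E\<close>.\<close>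
definition delta_exp_law :: "real set \<Rightarrow> real \<Rightarrow> real \<Rightarrow> (real \<Rightarrow> real) \<Rightarrow> bool" where
  "delta_exp_law S l C E \<longleftrightarrow>
     (\<forall>s\<in>S. \<forall>u\<in>S. s < u \<and> (\<forall>x\<in>S. \<not> (s < x \<and> x < u)) \<longrightarrow> E u = E s * (1 + l * (u - s))) \<and>
     (\<forall>s\<in>S. \<forall>u\<in>S. \<bar>E u - E s - l * E u * (u - s)\<bar> \<le> C * (u - s)\<^sup>2)"

lemma delta_exp_law_kappa:
  assumes "delta_exp_law S l C E"
  shows "delta_exp_law (kappa S) l C E"
proof -
  have "\<forall>x\<in>S. \<not> (s < x \<and> x < u)"
    if "s \<in> kappa S" "u \<in> kappa S" "\<forall>x\<in>kappa S. \<not> (s < x \<and> x < u)" for s u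
  proof (intro ballI notI)
    fix x assume x: "x \<in> S" "s < x \<and> x < u"
    have "u \<in> S" using that kappa_subset by blast
    then have "x \<in> kappa S" using kappa_memI x by blast
    then show False using that x by blast
  qed
  moreover have "s \<in> S" if "s \<in> kappa S" for s using that kappa_subset by blast
  ultimately show ?thesis using assms unfolding delta_exp_law_def by blast
qed

lemma delta_exp_law_remainder:
  assumes "delta_exp_law S l C E" "s \<in> S" "t \<in> S"
  shows "\<bar>E t - E s - l * E t * (t - s)\<bar> \<le> \<bar>C\<bar> * \<bar>t - s\<bar> * \<bar>t - s\<bar>"
proof -
  have "\<bar>E t - E s - l * E t * (t - s)\<bar> \<le> C * (t - s)\<^sup>2"
    using assms unfolding delta_exp_law_def by blast
  also have "\<dots> \<le> \<bar>C\<bar> * (t - s)\<^sup>2" by (rule mult_right_mono) auto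
  finally show ?thesis by (simp add: power2_eq_square abs_mult_self_eq mult.assoc)
qed

lemma delta_exp_law_continuous_on:
  assumes "delta_exp_law S l C E"
  shows "continuous_on S E"
  unfolding continuous_on_eq_continuous_within
proof
  fix t assume t: "t \<in> S"
  have "((\<lambda>s. E s - E t) \<longlongrightarrow> 0) (at t within S)"
  proof (rule Lim_null_comparison)
    show "\<forall>\<^sub>F s in at t within S. norm (E s - E t) \<le> (\<bar>l * E t\<bar> + \<bar>C\<bar> * \<bar>t - s\<bar>) * \<bar>t - s\<bar>"
      unfolding eventually_at_filter
    proof (intro always_eventually allI impI)
      fix s assume "s \<noteq> t" "s \<in> S"
      have "\<bar>E s - E t\<bar> \<le> \<bar>E t - E s - l * E t * (t - s)\<bar> + \<bar>l * E t * (t - s)\<bar>"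
        using abs_triangle_ineq4[of "- (E t - E s - l * E t * (t - s))" "l * E t * (t - s)"] by simp
      moreover have "(\<bar>l * E t\<bar> + \<bar>C\<bar> * \<bar>t - s\<bar>) * \<bar>t - s\<bar>
          = \<bar>l * E t * (t - s)\<bar> + \<bar>C\<bar> * \<bar>t - s\<bar> * \<bar>t - s\<bar>"
        by (simp only: abs_mult distrib_right)
      ultimately show "norm (E s - E t) \<le> (\<bar>l * E t\<bar> + \<bar>C\<bar> * \<bar>t - s\<bar>) * \<bar>t - s\<bar>"
        using delta_exp_law_remainder[OF assms \<open>s \<in> S\<close> t] by simp
    qed
    show "((\<lambda>s. (\<bar>l * E t\<bar> + \<bar>C\<bar> * \<bar>t - s\<bar>) * \<bar>t - s\<bar>) \<longlongrightarrow> 0) (at t within S)"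
      by (auto intro!: tendsto_eq_intros)
  qed
  then show "continuous (at t within S) E" by (simp add: continuous_within Lim_null[symmetric])
qed

lemma has_delta_derivative_if_delta_exp_law:
  assumes "closed S" "delta_exp_law S l C E" "t \<in> kappa S"
  shows "has_delta_derivative E (l * E t) S t"
proof -
  have tS: "t \<in> S" using assms(3) kappa_subset by blast
  note rem = delta_exp_law_remainder[OF assms(2) _ tS]
  show ?thesis
  proof (cases "t < sigma S t")
    case True
    have "sigma S t \<in> S" using sigma_mem[OF assms(1) tS] .
    moreover have "\<forall>x\<in>S. \<not> (t < x \<and> x < sigma S t)" using sigma_le by force
    ultimately have "E (sigma S t) = E t * (1 + l * (sigma S t - t))"
      using assms(2) tS True unfolding delta_exp_law_def by blast
    then have "E (sigma S t) = E t + l * E t * (sigma S t - t)" by (simp add: algebra_simps)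
    moreover have "continuous (at t within S) E"
      using delta_exp_law_continuous_on[OF assms(2)] tS unfolding continuous_on_eq_continuous_within by blast
    ultimately show ?thesis using has_delta_derivative_right_scatteredI[OF assms(3) True] by simp
  next
    case False
    then have st: "sigma S t = t" using sigma_ge[of t S] by simp
    show ?thesis unfolding has_delta_derivative_def st
    proof (intro conjI allI impI)
      fix e :: real assume e: "e > 0"
      show "\<exists>d>0. \<forall>s\<in>S. \<bar>s - t\<bar> < d \<longrightarrow> \<bar>E t - E s - l * E t * (t - s)\<bar> \<le> e * \<bar>t - s\<bar>"
      proof (intro exI[of _ "e / (\<bar>C\<bar> + 1)"] conjI ballI impI)
        fix s assume s: "s \<in> S" "\<bar>s - t\<bar> < e / (\<bar>C\<bar> + 1)"
        then have "(\<bar>C\<bar> + 1) * \<bar>t - s\<bar> < e" by (simp add: field_simps abs_minus_commute)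
        then have "\<bar>C\<bar> * \<bar>t - s\<bar> \<le> e" by (simp add: algebra_simps)
        then have "\<bar>C\<bar> * \<bar>t - s\<bar> * \<bar>t - s\<bar> \<le> e * \<bar>t - s\<bar>" by (rule mult_right_mono) simp
        then show "\<bar>E t - E s - l * E t * (t - s)\<bar> \<le> e * \<bar>t - s\<bar>" using rem[OF s(1)] by linarith
      qed (use e in simp)
    qed (fact assms)
  qed
qed

text \<open>\<open>h (l - \<xi>\<^sub>h(l))\<close> for the cylinder transformation \<open>\<xi>\<^sub>h(l) = ln (1 + l h) / h\<close>.\<close>
definition log_defect :: "real \<Rightarrow> real \<Rightarrow> real" where
  "log_defect l h = l * h - ln (1 + l * h)"

lemma log_defect_nonneg:
  assumes "l > 0" "h \<ge> 0"
  shows "log_defect l h \<ge> 0"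
  using ln_le_minus_one[of "1 + l * h"] assms unfolding log_defect_def by (simp add: add_pos_nonneg)

lemma log_defect_mono:
  assumes "l > 0" "0 \<le> x" "x \<le> y"
  shows "log_defect l x \<le> log_defect l y"
proof -
  have px: "1 + l * x \<ge> 1" and py: "1 + l * y > 0" using assms by (simp_all add: add_pos_nonneg)
  have "ln (1 + l * y) - ln (1 + l * x) = ln ((1 + l * y) / (1 + l * x))" using px py by (simp add: ln_div)
  also have "\<dots> \<le> (1 + l * y) / (1 + l * x) - 1" using px py by (intro ln_le_minus_one) simp
  also have "\<dots> = l * (y - x) / (1 + l * x)" using px by (simp add: field_simps)
  also have "\<dots> \<le> l * (y - x) / 1" by (rule divide_left_mono) (use px assms in \<open>auto simp: add_pos_nonneg\<close>)
  finally show ?thesis unfolding log_defect_def by (simp add: algebra_simps)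
qed

lemma log_defect_superadditive:
  assumes "l > 0" "0 \<le> x" "0 \<le> y"
  shows "log_defect l x + log_defect l y \<le> log_defect l (x + y)"
proof -
  have px: "1 + l * x > 0" and py: "1 + l * y > 0" using assms by (simp_all add: add_pos_nonneg)
  have "1 + l * (x + y) \<le> (1 + l * x) * (1 + l * y)" using assms by (simp add: algebra_simps)
  then have "ln (1 + l * (x + y)) \<le> ln ((1 + l * x) * (1 + l * y))"
    using assms px py by (subst ln_le_cancel_iff) (auto simp: add_pos_nonneg)
  also have "\<dots> = ln (1 + l * x) + ln (1 + l * y)" using px py by (simp add: ln_mult)
  finally show ?thesis unfolding log_defect_def by (simp add: algebra_simps)
qed

lemma sum_log_defect_le:
  assumes "l > 0" "finite P" "\<forall>x\<in>P. h x \<ge> 0"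
  shows "(\<Sum>x\<in>P. log_defect l (h x)) \<le> log_defect l (\<Sum>x\<in>P. h x)"
  using assms(2,3)
proof (induction P rule: finite_induct)
  case (insert y P)
  then have "log_defect l (h y) + (\<Sum>x\<in>P. log_defect l (h x)) \<le> log_defect l (h y) + log_defect l (\<Sum>x\<in>P. h x)"
    by simp
  also have "\<dots> \<le> log_defect l (h y + (\<Sum>x\<in>P. h x))"
    using insert assms(1) by (intro log_defect_superadditive) (auto intro: sum_nonneg)
  finally show ?case using insert by simp
qed (simp add: log_defect_def)

lemma sum_graininess_le:
  assumes "finite P" "P \<subseteq> S \<inter> {s..<t}" "t \<in> S" "s \<le> t"
  shows "(\<Sum>x\<in>P. sigma S x - x) \<le> t - s"
  using assms
proof (induction P arbitrary: t rule: finite_linorder_max_induct)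
  case (insert m P)
  have m: "m \<in> S" "s \<le> m" "m < t" using insert.prems by auto
  have "(\<Sum>x\<in>P. sigma S x - x) \<le> m - s" using insert.IH[of m] insert.hyps(2) insert.prems m by force
  moreover have "sigma S m \<le> t" using sigma_le[OF insert.prems(2) m(3)] .
  moreover have "m \<notin> P" using insert.hyps by auto
  ultimately show ?case using insert.hyps by simp
qed simp

definition right_scattered :: "real set \<Rightarrow> real set" where
  "right_scattered S = {x\<in>S. x < sigma S x}"

context
  fixes S :: "real set" and a b l :: real
  assumes S: "compact S" "a \<in> S" "b \<in> S" "\<forall>s\<in>S. a \<le> s \<and> s \<le> b" and l: "l > 0"
begin

definition jump_defect :: "real \<Rightarrow> real" where
  "jump_defect x = log_defect l (sigma S x - x)"

text \<open>The exponential function \<open>e\<^sub>l(t, a) = exp (\<integral>\<^sub>a\<^sup>t \<xi>\<^sub>\<mu>\<^sub>(\<^sub>s\<^sub>)(l) \<Delta>s)\<close>: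
  since \<open>\<xi>\<^sub>0(l) = l\<close>, the exponent is \<open>l (t - a)\<close> corrected at the countably many
  right-scattered points.\<close>
definition ts_exp_exponent :: "real \<Rightarrow> real" where
  "ts_exp_exponent t = l * (t - a) - infsum jump_defect (right_scattered S \<inter> {a..<t})"

definition ts_exp :: "real \<Rightarrow> real" where
  "ts_exp t = exp (ts_exp_exponent t)"

lemma jump_defect_nonneg: "x \<in> right_scattered S \<Longrightarrow> jump_defect x \<ge> 0"
  unfolding jump_defect_def right_scattered_def using l by (intro log_defect_nonneg) auto

lemma sum_jump_defect_le:
  assumes "finite P" "P \<subseteq> right_scattered S \<inter> {s..<t}" "t \<in> S" "s \<le> t"
  shows "sum jump_defect P \<le> log_defect l (t - s)"
proof -
  have nonneg: "\<forall>x\<in>P. sigma S x - x \<ge> 0" using sigma_ge by (simp add: algebra_simps)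
  have "sum jump_defect P \<le> log_defect l (\<Sum>x\<in>P. sigma S x - x)"
    unfolding jump_defect_def using sum_log_defect_le[OF l assms(1) nonneg] .
  also have "\<dots> \<le> log_defect l (t - s)"
    using assms nonneg l unfolding right_scattered_def
    by (intro log_defect_mono sum_graininess_le sum_nonneg) auto
  finally show ?thesis .
qed

lemma jump_defect_summable: "jump_defect summable_on right_scattered S"
proof (rule nonneg_bdd_above_summable_on)
  show "\<And>x. x \<in> right_scattered S \<Longrightarrow> 0 \<le> jump_defect x" by (rule jump_defect_nonneg)
  have "right_scattered S \<subseteq> right_scattered S \<inter> {a..<b}"
  proof
    fix x assume x: "x \<in> right_scattered S"
    then have "x \<in> S" "x < sigma S x" unfolding right_scattered_def by auto
    moreover have "sigma S x \<le> b" using S sigma_mem[OF compact_imp_closed \<open>x \<in> S\<close>] by blast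
    ultimately show "x \<in> right_scattered S \<inter> {a..<b}" using x S by auto
  qed
  then show "bdd_above (sum jump_defect ` {F. F \<subseteq> right_scattered S \<and> finite F})"
    using sum_jump_defect_le S by (intro bdd_aboveI2[of _ _ "log_defect l (b - a)"]) blast
qed

lemma infsum_jump_defect_bounds:
  assumes "t \<in> S" "s \<le> t"
  shows "0 \<le> infsum jump_defect (right_scattered S \<inter> {s..<t})"
    and "infsum jump_defect (right_scattered S \<inter> {s..<t}) \<le> log_defect l (t - s)"
proof -
  show "0 \<le> infsum jump_defect (right_scattered S \<inter> {s..<t})"
    using jump_defect_nonneg by (intro infsum_nonneg) auto
  have "jump_defect summable_on (right_scattered S \<inter> {s..<t})"
    using jump_defect_summable by (rule summable_on_subset_banach) auto
  then show "infsum jump_defect (right_scattered S \<inter> {s..<t}) \<le> log_defect l (t - s)"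
    by (rule infsum_le_finite_sums) (use sum_jump_defect_le assms in blast)
qed

lemma ts_exp_exponent_diff:
  assumes "s \<in> S" "s \<le> t"
  shows "ts_exp_exponent t - ts_exp_exponent s = l * (t - s) - infsum jump_defect (right_scattered S \<inter> {s..<t})"
proof -
  have "a \<le> s" using S assms by blast
  then have "right_scattered S \<inter> {a..<t} = (right_scattered S \<inter> {a..<s}) \<union> (right_scattered S \<inter> {s..<t})"
    using assms by auto
  then have "infsum jump_defect (right_scattered S \<inter> {a..<t})
      = infsum jump_defect (right_scattered S \<inter> {a..<s}) + infsum jump_defect (right_scattered S \<inter> {s..<t})"
    by (simp only:) (rule infsum_Un_disjoint; auto intro: summable_on_subset_banach[OF jump_defect_summable])
  then show ?thesis unfolding ts_exp_exponent_def by (simp add: algebra_simps)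
qed

lemma ts_exp_gap:
  assumes "s \<in> S" "t \<in> S" "s < t" "\<forall>x\<in>S. \<not> (s < x \<and> x < t)"
  shows "ts_exp t = ts_exp s * (1 + l * (t - s))"
proof -
  have sig: "sigma S s = t" using sigma_eqI assms(2-4) .
  have "right_scattered S \<inter> {s..<t} = {s}"
    using assms sig unfolding right_scattered_def by force
  then have "ts_exp_exponent t - ts_exp_exponent s = l * (t - s) - jump_defect s"
    using ts_exp_exponent_diff[OF assms(1)] assms(3) by simp
  then have "ts_exp_exponent t = ts_exp_exponent s + ln (1 + l * (t - s))"
    unfolding jump_defect_def sig log_defect_def by simp
  moreover have "1 + l * (t - s) > 0" using assms l by (simp add: add_pos_nonneg)
  ultimately show ?thesis unfolding ts_exp_def by (simp add: exp_add)
qed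

lemma ts_exp_bounds:
  assumes "s \<in> S" "t \<in> S" "s \<le> t"
  shows "ts_exp s * (1 + l * (t - s)) \<le> ts_exp t" and "ts_exp t \<le> ts_exp s * exp (l * (t - s))"
proof -
  note diff = ts_exp_exponent_diff[OF assms(1,3)] and bds = infsum_jump_defect_bounds[OF assms(2,3)]
  have "1 + l * (t - s) > 0" using assms l by (simp add: add_pos_nonneg)
  moreover have "ts_exp_exponent s + ln (1 + l * (t - s)) \<le> ts_exp_exponent t"
    using diff bds unfolding log_defect_def by simp
  ultimately show "ts_exp s * (1 + l * (t - s)) \<le> ts_exp t"
    unfolding ts_exp_def by (metis exp_add exp_le_cancel_iff exp_ln)
  have "ts_exp_exponent t \<le> ts_exp_exponent s + l * (t - s)" using diff bds by simp
  then show "ts_exp t \<le> ts_exp s * exp (l * (t - s))" unfolding ts_exp_def by (simp add: exp_add[symmetric])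
qed

lemma ts_exp_at_start: "ts_exp a = 1"
  unfolding ts_exp_def ts_exp_exponent_def by simp

lemma ts_exp_range:
  assumes "t \<in> S"
  shows "1 \<le> ts_exp t" "ts_exp t \<le> exp (l * (b - a))"
proof -
  have at: "a \<le> t" "t \<le> b" using S assms by auto
  have "1 \<le> 1 + l * (t - a)" using at l by simp
  also have "\<dots> \<le> ts_exp t" using ts_exp_bounds(1)[OF S(2) assms at(1)] ts_exp_at_start by simp
  finally show "1 \<le> ts_exp t" .
  have "ts_exp t \<le> exp (l * (t - a))" using ts_exp_bounds(2)[OF S(2) assms at(1)] ts_exp_at_start by simp
  also have "\<dots> \<le> exp (l * (b - a))" using at l by simp
  finally show "ts_exp t \<le> exp (l * (b - a))" .
qed

lemma delta_exp_law_ts_exp: "delta_exp_law S l ((l * exp (l * (b - a)))\<^sup>2) ts_exp"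
  unfolding delta_exp_law_def
proof (intro conjI ballI impI)
  fix s u assume "s \<in> S" "u \<in> S" "s < u \<and> (\<forall>x\<in>S. \<not> (s < x \<and> x < u))"
  then show "ts_exp u = ts_exp s * (1 + l * (u - s))" using ts_exp_gap by blast
next
  fix s u assume su: "s \<in> S" "u \<in> S"
  let ?M = "exp (l * (b - a))"
  have sandwich: "\<bar>ts_exp t - ts_exp s - l * ts_exp t * (t - s)\<bar> \<le> (l * ?M)\<^sup>2 * (t - s)\<^sup>2 \<and>
      \<bar>ts_exp s - ts_exp t + l * ts_exp s * (t - s)\<bar> \<le> (l * ?M)\<^sup>2 * (t - s)\<^sup>2"
    if "s \<in> S" "t \<in> S" "s \<le> t" for s t
  proof -
    have "a \<le> s" "t \<le> b" using S that by auto
    then have "exp (l * (t - s)) \<le> ?M" using l by (simp add: mult_left_mono)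
    then show ?thesis
      using exp_sandwich_remainder[of l "t - s" "ts_exp s" ?M "ts_exp t"] l that
        ts_exp_range ts_exp_bounds by simp
  qed
  show "\<bar>ts_exp u - ts_exp s - l * ts_exp u * (u - s)\<bar> \<le> (l * ?M)\<^sup>2 * (u - s)\<^sup>2"
  proof (cases "s \<le> u")
    case False
    then show ?thesis using sandwich[OF su(2,1)] by (simp add: power2_commute algebra_simps)
  qed (use sandwich su in blast)
qed

end

lemma delta_exp_exists:
  assumes "compact S" "a \<in> S" "b \<in> S" "\<forall>s\<in>S. a \<le> s \<and> s \<le> b" "l > 0"
  obtains E C M where "delta_exp_law S l C E" "E a = 1" "\<forall>x\<in>S. 1 \<le> E x \<and> E x \<le> M"
  using that delta_exp_law_ts_exp[OF assms] ts_exp_at_start[OF assms] ts_exp_range[OF assms] by blast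

section \<open>Hyers--Ulam stability\<close>

lemma first_order_stability:
  assumes S: "compact S" "a \<in> S" "\<forall>s\<in>S. a \<le> s"
    and E: "delta_exp_law S l C E" "E a = 1" "\<forall>x\<in>S. 1 \<le> E x \<and> E x \<le> M"
    and cont: "continuous_on S w"
    and der: "\<And>t s. t \<in> S \<Longrightarrow> s \<in> S \<Longrightarrow> t < s \<Longrightarrow>
                has_delta_derivative w (w' t) S t \<and> \<bar>w' t - l * w t\<bar> \<le> B"
    and t: "t \<in> S"
  shows "\<bar>w t - w a * E t\<bar> \<le> M * (B * (t - a))"
proof -
  have closed: "closed S" using S(1) by (rule compact_imp_closed)
  define q where "q x = w x / E x" for x
  have "\<exists>D. has_delta_derivative q D S t \<and> \<bar>D\<bar> \<le> B" if "t \<in> S" "s \<in> S" "t < s" for t s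
  proof -
    have dE: "has_delta_derivative E (l * E t) S t"
      using has_delta_derivative_if_delta_exp_law[OF closed E(1)] kappa_memI that by blast
    have Et: "E t > 0" "E (sigma S t) \<ge> 1" using E(3) sigma_mem[OF closed] that by force+
    have "has_delta_derivative q ((w' t * E t - w t * (l * E t)) / (E t * E (sigma S t))) S t"
      unfolding q_def using der[OF that] dE Et by (intro has_delta_derivative_divide) auto
    moreover have "(w' t * E t - w t * (l * E t)) / (E t * E (sigma S t)) = (w' t - l * w t) / E (sigma S t)"
      using Et by (simp add: field_simps)
    moreover have "\<bar>w' t - l * w t\<bar> / E (sigma S t) \<le> \<bar>w' t - l * w t\<bar> / 1"
      using Et by (intro divide_left_mono) auto
    then have "\<bar>(w' t - l * w t) / E (sigma S t)\<bar> \<le> B" using der[OF that] Et by (simp add: abs_divide)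
    ultimately show ?thesis by auto
  qed
  moreover have "continuous_on S q"
    unfolding q_def using cont delta_exp_law_continuous_on[OF E(1)] E(3)
    by (intro continuous_on_divide) force+
  ultimately have "\<bar>q t - q a\<bar> \<le> B * (t - a)" using delta_mean_value_inequality[OF S] t by blast
  moreover have Et: "1 \<le> E t" "E t \<le> M" using E(3) t by auto
  moreover have "w t - w a * E t = E t * (q t - q a)" using E(2) Et unfolding q_def by (simp add: field_simps)
  ultimately show ?thesis by (simp add: abs_mult mult_mono)
qed

lemma exp_combination_delta_derivatives:
  fixes k d :: real
  assumes S: "compact S" "m1 \<in> kappa S" "m2 \<in> kappa S" "m1 \<noteq> m2"
    and E1: "delta_exp_law S l1 C1 E1" and E2: "delta_exp_law S l2 C2 E2"
  defines "u \<equiv> \<lambda>x. k * E1 x + d * E2 x"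
  shows "t \<in> kappa S \<Longrightarrow> has_delta_derivative u (k * l1 * E1 t + d * l2 * E2 t) S t"
    and "t \<in> kappa S \<Longrightarrow> delta_deriv u S t = k * l1 * E1 t + d * l2 * E2 t"
    and "t \<in> kappa (kappa S) \<Longrightarrow>
      has_delta_derivative (delta_deriv u S) (k * l1\<^sup>2 * E1 t + d * l2\<^sup>2 * E2 t) (kappa S) t"
    and "t \<in> kappa (kappa S) \<Longrightarrow> delta_deriv2 u S t = k * l1\<^sup>2 * E1 t + d * l2\<^sup>2 * E2 t"
proof -
  define V where "V x = k * l1 * E1 x + d * l2 * E2 x" for x
  have closed: "closed S" "closed (kappa S)" using S(1) compact_kappa compact_imp_closed by blast+
  have other: "\<exists>x\<in>kappa S. x \<noteq> t" for t using S(2-4) by (cases "t = m1") auto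
  show dd1: "has_delta_derivative u (V t) S t" if "t \<in> kappa S" for t
    using has_delta_derivative_lincomb[OF has_delta_derivative_if_delta_exp_law[OF closed(1) E1 that]
        has_delta_derivative_if_delta_exp_law[OF closed(1) E2 that], of k d]
    unfolding u_def V_def by (simp add: mult.assoc)
  show deriv1: "delta_deriv u S t = V t" if "t \<in> kappa S" for t
  proof -
    obtain x where "x \<in> kappa S" "x \<noteq> t" using other by blast
    moreover have "x \<in> S" using \<open>x \<in> kappa S\<close> kappa_subset by blast
    ultimately show ?thesis using delta_deriv_eqI[OF dd1[OF that]] by simp
  qed
  show dd2: "has_delta_derivative (delta_deriv u S) (k * l1\<^sup>2 * E1 t + d * l2\<^sup>2 * E2 t) (kappa S) t"
    if t: "t \<in> kappa (kappa S)" for t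
  proof -
    have "has_delta_derivative V (k * l1\<^sup>2 * E1 t + d * l2\<^sup>2 * E2 t) (kappa S) t"
      using has_delta_derivative_lincomb[OF
          has_delta_derivative_if_delta_exp_law[OF closed(2) delta_exp_law_kappa[OF E1] t]
          has_delta_derivative_if_delta_exp_law[OF closed(2) delta_exp_law_kappa[OF E2] t], of "k * l1" "d * l2"]
      unfolding V_def by (simp add: power2_eq_square mult.assoc)
    moreover have "t \<in> kappa S" using t kappa_subset by blast
    moreover have "\<forall>x\<in>kappa S. delta_deriv u S x = V x" using deriv1 by blast
    ultimately show ?thesis using has_delta_derivative_cong[OF closed(2), of t "delta_deriv u S" V] by simp
  qed
  show "delta_deriv2 u S t = k * l1\<^sup>2 * E1 t + d * l2\<^sup>2 * E2 t" if "t \<in> kappa (kappa S)" for t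
  proof -
    obtain x where "x \<in> kappa S" "x \<noteq> t" using other by blast
    then show ?thesis unfolding delta_deriv2_def using delta_deriv_eqI[OF dd2[OF that]] by simp
  qed
qed

lemma exp_combination_solves:
  fixes k d :: real
  assumes S: "compact S" "m1 \<in> kappa S" "m2 \<in> kappa S" "m1 \<noteq> m2"
    and E1: "delta_exp_law S l1 C1 E1" and E2: "delta_exp_law S l2 C2 E2"
  defines "u \<equiv> \<lambda>x. k * E1 x + d * E2 x"
  shows "C2rd S u"
    and "\<forall>t\<in>kappa (kappa S). delta_deriv2 u S t - (l1 + l2) * delta_deriv u S t + l1 * l2 * u t = 0"
proof -
  note D = exp_combination_delta_derivatives[OF assms(1-6), where k = k and d = d, folded u_def]
  have sub: "kappa (kappa S) \<subseteq> S" using kappa_subset by (metis subset_trans)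
  have "continuous_on (kappa (kappa S)) (\<lambda>t. k * l1\<^sup>2 * E1 t + d * l2\<^sup>2 * E2 t)"
    using continuous_on_subset[OF delta_exp_law_continuous_on[OF E1] sub]
      continuous_on_subset[OF delta_exp_law_continuous_on[OF E2] sub]
    by (intro continuous_intros)
  moreover have "continuous_on (kappa (kappa S)) (delta_deriv2 u S)
      = continuous_on (kappa (kappa S)) (\<lambda>t. k * l1\<^sup>2 * E1 t + d * l2\<^sup>2 * E2 t)"
    by (rule continuous_on_cong) (simp_all add: D(4))
  ultimately have "rd_continuous_on (kappa (kappa S)) (delta_deriv2 u S)"
    by (simp add: rd_continuous_on_if_continuous_on)
  moreover have "delta_differentiable_on u S" "delta_differentiable_on (delta_deriv u S) (kappa S)"
    unfolding delta_differentiable_on_def using D(1,3) by blast+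
  ultimately show "C2rd S u" unfolding C2rd_def delta_deriv2_def by simp
  show "\<forall>t\<in>kappa (kappa S). delta_deriv2 u S t - (l1 + l2) * delta_deriv u S t + l1 * l2 * u t = 0"
  proof
    fix t assume t: "t \<in> kappa (kappa S)"
    then have "t \<in> kappa S" using kappa_subset by blast
    then show "delta_deriv2 u S t - (l1 + l2) * delta_deriv u S t + l1 * l2 * u t = 0"
      using D(2) D(4)[OF t] by (simp add: u_def power2_eq_square algebra_simps)
  qed
qed

lemma C2rd_has_delta_derivatives:
  assumes y: "C2rd S y" and S: "m1 \<in> kappa S" "m2 \<in> kappa S" "m1 \<noteq> m2"
  shows "t \<in> kappa S \<Longrightarrow> has_delta_derivative y (delta_deriv y S t) S t"
    and "t \<in> kappa (kappa S) \<Longrightarrow>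
      has_delta_derivative (delta_deriv y S) (delta_deriv2 y S t) (kappa S) t"
    and "continuous_on S y" "continuous_on (kappa S) (delta_deriv y S)"
proof -
  have d1: "delta_differentiable_on y S" and d2: "delta_differentiable_on (delta_deriv y S) (kappa S)"
    using y unfolding C2rd_def by blast+
  have other: "\<exists>x\<in>kappa S. x \<noteq> t" for t using S by (cases "t = m1") auto
  show "has_delta_derivative y (delta_deriv y S t) S t" if t: "t \<in> kappa S"
  proof -
    obtain x where "x \<in> kappa S" "x \<noteq> t" using other by blast
    then show ?thesis using has_delta_derivative_delta_deriv[OF d1 t] kappa_subset by blast
  qed
  show "has_delta_derivative (delta_deriv y S) (delta_deriv2 y S t) (kappa S) t" if t: "t \<in> kappa (kappa S)"
  proof -
    obtain x where "x \<in> kappa S" "x \<noteq> t" using other by blast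
    then show ?thesis unfolding delta_deriv2_def by (rule has_delta_derivative_delta_deriv[OF d2 t])
  qed
  show "continuous_on S y" "continuous_on (kappa S) (delta_deriv y S)"
    using d1 d2 by (simp_all add: delta_differentiable_on_imp_continuous_on)
qed

lemma first_factor_estimate:
  assumes S: "compact S" "a \<in> kappa S" "m \<in> kappa S" "a \<noteq> m" "\<forall>s\<in>S. a \<le> s"
    and E: "delta_exp_law S l1 C E" "E a = 1" "\<forall>x\<in>S. 1 \<le> E x \<and> E x \<le> M"
    and y: "C2rd S y"
    and ineq: "\<forall>t\<in>kappa (kappa S).
      \<bar>delta_deriv2 y S t - (l1 + l2) * delta_deriv y S t + l1 * l2 * y t\<bar> \<le> \<epsilon>"
    and t: "t \<in> kappa S"
  shows "\<bar>delta_deriv y S t - l2 * y t - (delta_deriv y S a - l2 * y a) * E t\<bar> \<le> M * (\<epsilon> * (t - a))"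
proof -
  note D = C2rd_has_delta_derivatives[OF y S(2-4)]
  define w where "w x = delta_deriv y S x - l2 * y x" for x
  have w_der: "has_delta_derivative w (delta_deriv2 y S t - l2 * delta_deriv y S t) (kappa S) t \<and>
      \<bar>delta_deriv2 y S t - l2 * delta_deriv y S t - l1 * w t\<bar> \<le> \<epsilon>"
    if ts: "t \<in> kappa S" "s \<in> kappa S" "t < s" for t s
  proof -
    have t2: "t \<in> kappa (kappa S)" using kappa_memI ts .
    have "has_delta_derivative (\<lambda>x. 1 * delta_deriv y S x + (- l2) * y x)
        (1 * delta_deriv2 y S t + (- l2) * delta_deriv y S t) (kappa S) t"
      by (rule has_delta_derivative_lincomb[OF D(2)[OF t2] has_delta_derivative_kappa[OF D(1)[OF ts(1)] ts(2,3)]])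
    moreover have "\<bar>delta_deriv2 y S t - l2 * delta_deriv y S t - l1 * w t\<bar> \<le> \<epsilon>"
      using ineq t2 unfolding w_def by (simp add: algebra_simps)
    ultimately show ?thesis unfolding w_def by simp
  qed
  have cont: "continuous_on (kappa S) w"
    unfolding w_def using D(4) continuous_on_subset[OF D(3) kappa_subset] by (intro continuous_intros)
  have bounds: "\<forall>x\<in>kappa S. 1 \<le> E x \<and> E x \<le> M" and a_min: "\<forall>s\<in>kappa S. a \<le> s"
    using E(3) S(5) kappa_subset by blast+
  have "\<bar>w t - w a * E t\<bar> \<le> M * (\<epsilon> * (t - a))"
    by (rule first_order_stability[OF compact_kappa[OF S(1)] S(2) a_min delta_exp_law_kappa[OF E(1)] E(2)
          bounds cont w_der t])
  then show ?thesis by (simp only: w_def)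
qed

lemma distinct_roots_approximation:
  assumes S: "compact S" "a \<in> kappa S" "m \<in> kappa S" "a \<noteq> m" "\<forall>s\<in>S. a \<le> s \<and> s \<le> b"
    and E1: "delta_exp_law S l1 C1 E1" "E1 a = 1" "\<forall>x\<in>S. 1 \<le> E1 x \<and> E1 x \<le> M1"
    and E2: "delta_exp_law S l2 C2 E2" "E2 a = 1" "\<forall>x\<in>S. 1 \<le> E2 x \<and> E2 x \<le> M2"
    and "l1 \<noteq> l2" "0 \<le> \<epsilon>" and y: "C2rd S y"
    and ineq: "\<forall>t\<in>kappa (kappa S).
      \<bar>delta_deriv2 y S t - (l1 + l2) * delta_deriv y S t + l1 * l2 * y t\<bar> \<le> \<epsilon>"
  obtains k d where "\<forall>t\<in>S. \<bar>y t - (k * E1 t + d * E2 t)\<bar> \<le> M1 * M2 * (b - a)\<^sup>2 * \<epsilon>"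
proof -
  note D = C2rd_has_delta_derivatives[OF y S(2-4)]
  have aS: "a \<in> S" and a_min: "\<forall>s\<in>S. a \<le> s" using S kappa_subset by blast+
  have M: "0 \<le> M1" "0 \<le> M2" using E1(3) E2(3) aS by force+
  define k where "k = (delta_deriv y S a - l2 * y a) / (l1 - l2)"
  define p where "p x = y x - k * E1 x" for x
  have p_der: "has_delta_derivative p (delta_deriv y S t - k * (l1 * E1 t)) S t \<and>
      \<bar>delta_deriv y S t - k * (l1 * E1 t) - l2 * p t\<bar> \<le> M1 * (\<epsilon> * (b - a))"
    if ts: "t \<in> S" "s \<in> S" "t < s" for t s
  proof -
    have t: "t \<in> kappa S" using kappa_memI ts .
    have "has_delta_derivative (\<lambda>x. 1 * y x + (- k) * E1 x) (1 * delta_deriv y S t + (- k) * (l1 * E1 t)) S t"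
      by (rule has_delta_derivative_lincomb[OF D(1)[OF t]
            has_delta_derivative_if_delta_exp_law[OF compact_imp_closed[OF S(1)] E1(1) t]])
    moreover have "delta_deriv y S t - k * (l1 * E1 t) - l2 * p t
        = delta_deriv y S t - l2 * y t - k * (l1 - l2) * E1 t"
      by (simp add: p_def algebra_simps)
    moreover have "k * (l1 - l2) = delta_deriv y S a - l2 * y a"
      using \<open>l1 \<noteq> l2\<close> by (simp add: k_def)
    moreover have "M1 * (\<epsilon> * (t - a)) \<le> M1 * (\<epsilon> * (b - a))"
      using S ts M \<open>0 \<le> \<epsilon>\<close> by (intro mult_left_mono) auto
    ultimately show ?thesis
      using first_factor_estimate[OF S(1-4) a_min E1 y ineq t] unfolding p_def by simp
  qed
  have cont: "continuous_on S p"
    unfolding p_def using D(3) delta_exp_law_continuous_on[OF E1(1)]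
    by (intro continuous_intros)
  have p: "\<bar>p t - p a * E2 t\<bar> \<le> M2 * (M1 * (\<epsilon> * (b - a)) * (t - a))" if "t \<in> S" for t
    by (rule first_order_stability[OF S(1) aS a_min E2 cont p_der that])
  have "\<bar>y t - (k * E1 t + p a * E2 t)\<bar> \<le> M1 * M2 * (b - a)\<^sup>2 * \<epsilon>" if "t \<in> S" for t
  proof -
    have "M2 * (M1 * (\<epsilon> * (b - a)) * (t - a)) \<le> M2 * (M1 * (\<epsilon> * (b - a)) * (b - a))"
      using S that M \<open>0 \<le> \<epsilon>\<close> by (intro mult_left_mono mult_nonneg_nonneg) auto
    then show ?thesis using p[OF that] unfolding p_def by (simp add: power2_eq_square algebra_simps)
  qed
  then show ?thesis using that by blast
qed

definition hyers_ulam_stable :: "real set \<Rightarrow> real \<Rightarrow> real \<Rightarrow> bool" where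
  "hyers_ulam_stable S \<alpha> \<beta> \<longleftrightarrow> (\<exists>K>0. \<forall>\<epsilon>>0. \<forall>y. C2rd S y \<and>
      (\<forall>t\<in>kappa (kappa S). \<bar>delta_deriv2 y S t + \<alpha> * delta_deriv y S t + \<beta> * y t\<bar> \<le> \<epsilon>)
    \<longrightarrow> (\<exists>u. C2rd S u \<and>
          (\<forall>t\<in>kappa (kappa S). delta_deriv2 u S t + \<alpha> * delta_deriv u S t + \<beta> * u t = 0) \<and>
          (\<forall>t\<in>S. \<bar>y t - u t\<bar> \<le> K * \<epsilon>)))"

lemma hyers_ulam_stable_distinct_roots:
  assumes S: "compact S" "a \<in> S" "b \<in> S" "\<forall>s\<in>S. a \<le> s \<and> s \<le> b" "m \<in> S" "a < m" "m < b"
    and l: "l1 > 0" "l2 > 0" "l1 \<noteq> l2"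
  shows "hyers_ulam_stable S (- (l1 + l2)) (l1 * l2)"
proof -
  obtain E1 C1 M1 where E1: "delta_exp_law S l1 C1 E1" "E1 a = 1" "\<forall>x\<in>S. 1 \<le> E1 x \<and> E1 x \<le> M1"
    using delta_exp_exists[OF S(1-4) l(1)] .
  obtain E2 C2 M2 where E2: "delta_exp_law S l2 C2 E2" "E2 a = 1" "\<forall>x\<in>S. 1 \<le> E2 x \<and> E2 x \<le> M2"
    using delta_exp_exists[OF S(1-4) l(2)] .
  have "0 \<le> M1" "0 \<le> M2" using E1(3) E2(3) S(2) by force+
  then have K: "M1 * M2 * (b - a)\<^sup>2 + 1 > 0" by (simp add: add_nonneg_pos)
  have m: "a \<in> kappa S" "m \<in> kappa S" "a \<noteq> m" using S kappa_memI by auto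
  show ?thesis unfolding hyers_ulam_stable_def
  proof (intro exI[of _ "M1 * M2 * (b - a)\<^sup>2 + 1"] conjI K allI impI)
    fix \<epsilon> :: real and y assume "\<epsilon> > 0" and y: "C2rd S y \<and> (\<forall>t\<in>kappa (kappa S).
      \<bar>delta_deriv2 y S t + - (l1 + l2) * delta_deriv y S t + l1 * l2 * y t\<bar> \<le> \<epsilon>)"
    then obtain k d where kd: "\<forall>t\<in>S. \<bar>y t - (k * E1 t + d * E2 t)\<bar> \<le> M1 * M2 * (b - a)\<^sup>2 * \<epsilon>"
      using distinct_roots_approximation[OF S(1) m S(4) E1 E2 l(3), where \<epsilon> = \<epsilon> and y = y] by (auto simp: algebra_simps)
    define u where "u x = k * E1 x + d * E2 x" for x
    have "C2rd S u" "\<forall>t\<in>kappa (kappa S).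
        delta_deriv2 u S t - (l1 + l2) * delta_deriv u S t + l1 * l2 * u t = 0"
      using exp_combination_solves[OF S(1) m E1(1) E2(1), where k = k and d = d] unfolding u_def[abs_def] by blast+
    moreover have "\<forall>t\<in>S. \<bar>y t - u t\<bar> \<le> (M1 * M2 * (b - a)\<^sup>2 + 1) * \<epsilon>"
      using kd \<open>\<epsilon> > 0\<close> unfolding u_def by (simp add: distrib_right add_increasing2)
    ultimately show "\<exists>u. C2rd S u \<and>
        (\<forall>t\<in>kappa (kappa S). delta_deriv2 u S t + - (l1 + l2) * delta_deriv u S t + l1 * l2 * u t = 0) \<and>
        (\<forall>t\<in>S. \<bar>y t - u t\<bar> \<le> (M1 * M2 * (b - a)\<^sup>2 + 1) * \<epsilon>)"
      by (intro exI[of _ u]) (auto simp: algebra_simps)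
  qed
qed

lemma delta_deriv_singleton: "delta_deriv f {a} a = delta_deriv g {a} a"
proof -
  have "kappa {a} = {a}" "sigma {a} a = a" unfolding kappa_def rho_def sigma_def by auto
  then have "has_delta_derivative h D {a} a" for h D unfolding has_delta_derivative_def by simp
  then show ?thesis unfolding delta_deriv_def by simp
qed

lemma two_point_time_scale:
  fixes a b :: real
  assumes "a < b"
  shows "kappa {a, b} = {a}" "kappa (kappa {a, b}) = {a}"
    and "delta_deriv f {a, b} a = (f b - f a) / (b - a)"
    and "C2rd {a, b} f"
proof -
  have "{s \<in> {a, b}. s < b} = {a}" "{s \<in> {a, b}. s > a} = {b}" using assms by auto
  then have r: "rho {a, b} b = a" and s: "sigma {a, b} a = b"
    unfolding rho_def sigma_def using assms by auto
  show k: "kappa {a, b} = {a}" unfolding kappa_def using assms r by auto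
  have k1: "kappa {a} = {a}" unfolding kappa_def rho_def by auto
  then show kk: "kappa (kappa {a, b}) = {a}" unfolding k .
  have h: "has_delta_derivative g ((g b - g a) / (b - a)) {a, b} a" for g
    unfolding has_delta_derivative_def k s
  proof (intro conjI allI impI)
    fix e :: real assume "e > 0"
    then show "\<exists>d>0. \<forall>s\<in>{a, b}. \<bar>s - a\<bar> < d \<longrightarrow> \<bar>g b - g s - (g b - g a) / (b - a) * (b - s)\<bar> \<le> e * \<bar>b - s\<bar>"
      using assms by (intro exI[of _ "b - a"]) auto
  qed simp
  show "delta_deriv f {a, b} a = (f b - f a) / (b - a)"
    using delta_deriv_eqI[OF h, of b] assms by simp
  have "has_delta_derivative g D {a} a" for g D
    using k1 unfolding has_delta_derivative_def sigma_def by simp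
  then have "delta_differentiable_on f {a, b}" "delta_differentiable_on (delta_deriv f {a, b}) (kappa {a, b})"
    unfolding delta_differentiable_on_def k k1 using h by auto
  moreover have "rd_continuous_on {a} g" for g
    by (rule rd_continuous_on_if_continuous_on) simp
  ultimately show "C2rd {a, b} f" unfolding C2rd_def kk by (intro conjI)
qed

text \<open>The single constraint at \<open>a\<close> involves \<open>u(b)\<close> only through \<open>\<alpha> u\<^sup>\<Delta>(a)\<close>, so moving
  \<open>y(b)\<close> by \<open>\<delta>\<close> cancels the defect \<open>r\<close> exactly when \<open>\<alpha> \<delta> / (b - a) = - r\<close>.\<close>
lemma hyers_ulam_stable_two_points:
  assumes "a < b" "\<alpha> \<noteq> 0"
  shows "hyers_ulam_stable {a, b} \<alpha> \<beta>"
  unfolding hyers_ulam_stable_def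
proof (intro exI[of _ "(b - a) / \<bar>\<alpha>\<bar>"] conjI allI impI)
  note tp = two_point_time_scale[OF assms(1)]
  show "(b - a) / \<bar>\<alpha>\<bar> > 0" using assms by simp
  fix \<epsilon> :: real and y assume y: "C2rd {a, b} y \<and> (\<forall>t\<in>kappa (kappa {a, b}).
      \<bar>delta_deriv2 y {a, b} t + \<alpha> * delta_deriv y {a, b} t + \<beta> * y t\<bar> \<le> \<epsilon>)"
  define r where "r = delta_deriv2 y {a, b} a + \<alpha> * delta_deriv y {a, b} a + \<beta> * y a"
  define \<delta> where "\<delta> = - r * (b - a) / \<alpha>"
  define u where "u t = y t + (if t = b then \<delta> else 0)" for t
  have ua: "u a = y a" "u b = y b + \<delta>" using assms(1) by (auto simp: u_def)
  then have Du: "delta_deriv u {a, b} a = delta_deriv y {a, b} a + \<delta> / (b - a)"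
    unfolding tp(3) by (simp add: diff_divide_distrib add_divide_distrib)
  have D2u: "delta_deriv2 u {a, b} a = delta_deriv2 y {a, b} a"
    unfolding delta_deriv2_def tp(1) by (rule delta_deriv_singleton)
  have "delta_deriv2 u {a, b} a + \<alpha> * delta_deriv u {a, b} a + \<beta> * u a = r + \<alpha> * (\<delta> / (b - a))"
    unfolding Du D2u ua(1) r_def by (simp add: algebra_simps)
  also have "\<alpha> * (\<delta> / (b - a)) = - r" unfolding \<delta>_def using assms by (simp add: field_simps)
  finally have "delta_deriv2 u {a, b} a + \<alpha> * delta_deriv u {a, b} a + \<beta> * u a = 0" by simp
  moreover have "\<bar>y t - u t\<bar> \<le> (b - a) / \<bar>\<alpha>\<bar> * \<epsilon>" if "t \<in> {a, b}" for t
  proof -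
    have "\<bar>r\<bar> \<le> \<epsilon>" using y tp(2) unfolding r_def by simp
    then have "\<bar>r\<bar> * ((b - a) / \<bar>\<alpha>\<bar>) \<le> \<epsilon> * ((b - a) / \<bar>\<alpha>\<bar>)"
      using assms by (intro mult_right_mono) auto
    moreover have "\<bar>\<delta>\<bar> = \<bar>r\<bar> * ((b - a) / \<bar>\<alpha>\<bar>)" unfolding \<delta>_def using assms by (simp add: abs_mult abs_divide)
    ultimately have "\<bar>\<delta>\<bar> \<le> (b - a) / \<bar>\<alpha>\<bar> * \<epsilon>" by (simp add: mult.commute)
    moreover have "0 \<le> (b - a) / \<bar>\<alpha>\<bar> * \<epsilon>" using calculation by linarith
    ultimately show ?thesis unfolding u_def by auto
  qed
  ultimately show "\<exists>u. C2rd {a, b} u \<and>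
      (\<forall>t\<in>kappa (kappa {a, b}). delta_deriv2 u {a, b} t + \<alpha> * delta_deriv u {a, b} t + \<beta> * u t = 0) \<and>
      (\<forall>t\<in>{a, b}. \<bar>y t - u t\<bar> \<le> (b - a) / \<bar>\<alpha>\<bar> * \<epsilon>)"
    using tp(2,4) by (intro exI[of _ u] conjI) simp_all
qed

lemma distinct_roots_coefficients:
  fixes l1 l2 \<alpha> \<beta> :: real
  assumes "l1 \<noteq> l2" "l1\<^sup>2 + \<alpha> * l1 + \<beta> = 0" "l2\<^sup>2 + \<alpha> * l2 + \<beta> = 0"
  shows "\<alpha> = - (l1 + l2)" "\<beta> = l1 * l2"
proof -
  have "(l1 - l2) * (l1 + l2 + \<alpha>) = 0" using assms(2,3) by (simp add: power2_eq_square algebra_simps)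
  then show \<alpha>: "\<alpha> = - (l1 + l2)" using assms(1) by simp
  show "\<beta> = l1 * l2" using assms(2) unfolding \<alpha> by (simp add: power2_eq_square algebra_simps)
qed

theorem mainTheorem1:
  fixes T :: "real set" and a b \<alpha> \<beta> :: real
  assumes "time_scale T" and "a \<in> T" and "b \<in> T" and "a < b"
    and "\<exists>l1 l2. l1 \<noteq> l2 \<and> l1 > 0 \<and> l2 > 0 \<and>
                 l1\<^sup>2 + \<alpha> * l1 + \<beta> = 0 \<and> l2\<^sup>2 + \<alpha> * l2 + \<beta> = 0"
  shows "\<exists>K>0. \<forall>\<epsilon>>0. \<forall>y. C2rd ({a..b} \<inter> T) y \<and>
            (\<forall>t\<in>kappa (kappa ({a..b} \<inter> T)).
               \<bar>delta_deriv2 y ({a..b} \<inter> T) t + \<alpha> * delta_deriv y ({a..b} \<inter> T) t + \<beta> * y t\<bar> \<le> \<epsilon>)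
          \<longrightarrow> (\<exists>u. C2rd ({a..b} \<inter> T) u \<and>
                 (\<forall>t\<in>kappa (kappa ({a..b} \<inter> T)).
                    delta_deriv2 u ({a..b} \<inter> T) t + \<alpha> * delta_deriv u ({a..b} \<inter> T) t + \<beta> * u t = 0) \<and>
                 (\<forall>t\<in>{a..b} \<inter> T. \<bar>y t - u t\<bar> \<le> K * \<epsilon>))"
proof -
  obtain l1 l2 where l: "l1 \<noteq> l2" "l1 > 0" "l2 > 0" "l1\<^sup>2 + \<alpha> * l1 + \<beta> = 0" "l2\<^sup>2 + \<alpha> * l2 + \<beta> = 0"
    using assms(5) by blast
  note coeffs = distinct_roots_coefficients[OF l(1,4,5)]
  let ?S = "{a..b} \<inter> T"
  have "closed T" using assms(1) unfolding time_scale_def by blast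
  then have S: "compact ?S" "a \<in> ?S" "b \<in> ?S" "\<forall>s\<in>?S. a \<le> s \<and> s \<le> b"
    using assms(2-4) by (auto intro: compact_Int_closed)
  have "hyers_ulam_stable ?S \<alpha> \<beta>"
  proof (cases "\<exists>m\<in>?S. a < m \<and> m < b")
    case True
    then obtain m where m: "m \<in> ?S" "a < m" "m < b" by blast
    show ?thesis using hyers_ulam_stable_distinct_roots[OF S m l(2,3,1)] unfolding coeffs .
  next
    case False
    have S_eq: "?S = {a, b}"
    proof
      show "?S \<subseteq> {a, b}"
      proof
        fix x assume x: "x \<in> ?S"
        then have "\<not> (a < x \<and> x < b)" using False by blast
        then show "x \<in> {a, b}" using x by auto
      qed
      show "{a, b} \<subseteq> ?S" using S(2,3) by simp
    qed
    have "\<alpha> \<noteq> 0" using coeffs(1) l(2,3) by simp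
    then show ?thesis unfolding S_eq by (rule hyers_ulam_stable_two_points[OF assms(4)])
  qed
  then show ?thesis unfolding hyers_ulam_stable_def .
qed

end
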